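(* Let $e=e_{\gamma,a}$ be the directed edge of $\Gamma$ with initial vertex (the element represented by) $\gamma$ and label $a\in\{x^{\pm1},y^{\pm1}\}$, where $\gamma\equiv x^{i_n}y^{\epsilon_n}\cdots x^{i_1}y^{\epsilon_1}x^{i_0}\in\mathcal N$ (with $n\ge0$, $\epsilon_j\in\{\pm1\}$, $i_j\in\mathbb Z$). Then $e$ does not lie on the tree $T$ if and only if one of the following holds: (1) $a\equiv y$, $n\ge1$ and $i_0\ge1$; (2) $a\equiv y^{-1}$, $n\ge1$ and $i_0\ge2$. In particular, all edges of $\Gamma$ labeled $x^{\pm1}$ lie on $T$.
   Context: $F$ is Thompson's group with generators $x,y$, $A=\{x^{\pm1},y^{\pm1}\}$, and $\Gamma$ is the Cayley graph of $F$ with respect to $A$. $\mathcal N$ is the set of words over $A$ containing no subword $aa^{-1}$ ($a\in A$), $y^\epsilon x^iy$, or $y^\epsilon x^{i+1}y^{-1}$ ($\epsilon=\pm1$, $i\ge1$); it is a set of unique normal forms for $F$ (the irreducible words of Guba–Sapir's convergent rewriting system). $T$ is the subtree of $\Gamma$ such that the labels of non-backtracking paths in $T$ starting at the identity vertex are exactly the words in $\mathcal N$. *)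

theory Defs
  imports Main
begin

text \<open>Generators of Thompson's group F and letters of the alphabet A = {x, x^-1, y, y^-1}.
 A letter (g, True) is g, a letter (g, False) is g^-1.\<close>
datatype gen = GX | GY

type_synonym letter = "gen \<times> bool"
type_synonym word = "letter list"

abbreviation lx :: letter where "lx \<equiv> (GX, True)"
abbreviation lX :: letter where "lX \<equiv> (GX, False)"
abbreviation ly :: letter where "ly \<equiv> (GY, True)"
abbreviation lY :: letter where "lY \<equiv> (GY, False)"

definition linv :: "letter \<Rightarrow> letter" where
  "linv l = (fst l, \<not> snd l)"

text \<open>Standard presentation F = < x, y | [x y^-1, x^-1 y x], [x y^-1, x^-2 y x^2] >,
  commutator [a,b] = a^-1 b^-1 a b.\<close>
definition rel1 :: word where
  "rel1 = [ly, lX] @ [lX, lY, lx] @ [lx, lY] @ [lX, ly, lx]"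
definition rel2 :: word where
  "rel2 = [ly, lX] @ [lX, lX, lY, lx, lx] @ [lx, lY] @ [lX, lX, ly, lx, lx]"

inductive eqF :: "word \<Rightarrow> word \<Rightarrow> bool" where
  eqF_refl: "eqF u u"
| eqF_sym: "eqF u v \<Longrightarrow> eqF v u"
| eqF_trans: "eqF u v \<Longrightarrow> eqF v w \<Longrightarrow> eqF u w"
| eqF_cong: "eqF u v \<Longrightarrow> eqF (p @ u @ s) (p @ v @ s)"
| eqF_cancel: "eqF [l, linv l] []"
| eqF_rel1: "eqF rel1 []"
| eqF_rel2: "eqF rel2 []"

definition subword :: "word \<Rightarrow> word \<Rightarrow> bool" where
  "subword u w \<longleftrightarrow> (\<exists>p s. w = p @ u @ s)"

definition NF :: "word set" where
  "NF = {w. (\<forall>l. \<not> subword [l, linv l] w)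
          \<and> (\<forall>e::bool. \<forall>i::nat. i \<ge> 1 \<longrightarrow>
                \<not> subword ([(GY, e)] @ replicate i lx @ [ly]) w
              \<and> \<not> subword ([(GY, e)] @ replicate (i + 1) lx @ [lY]) w)}"

definition xpow :: "int \<Rightarrow> word" where
  "xpow i = (if i \<ge> 0 then replicate (nat i) lx else replicate (nat (- i)) lX)"

fun nfword :: "nat \<Rightarrow> (nat \<Rightarrow> bool) \<Rightarrow> (nat \<Rightarrow> int) \<Rightarrow> word" where
  "nfword 0 eps i = xpow (i 0)"
| "nfword (Suc n) eps i = xpow (i (Suc n)) @ [(GY, eps (Suc n))] @ nfword n eps i"

text \<open>T consists of the edges from vertex w to vertex w b (label b)
  for all w b in N; the directed edge from g labelled a is the same geometric edge as the one
  from g a labelled a^-1.\<close>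
definition onT :: "word \<Rightarrow> letter \<Rightarrow> bool" where
  "onT \<gamma> a \<longleftrightarrow> (\<exists>w b. w @ [b] \<in> NF \<and>
      ((eqF w \<gamma> \<and> b = a) \<or> (eqF w (\<gamma> @ [a]) \<and> b = linv a)))"

end

theory Submission
  imports Defs
begin

(* Write y_s = x^-s y x^s. The two defining relations of F say y_s^(y_t) = y_(s+1) for
   s - t = 1, 2, and an induction on s - t gives it for all t < s. Hence every element of F is
   x^T y_(s_k)^(e_k) ... y_(s_1)^(e_1) with a suitably ordered index list, and right
   multiplication by a generator acts on these lists: x shifts every index, and y^(+-1) is pushed
   to the left through the list by the commutation rules until it cancels or the list is
   ordered again. This action respects the relations of F, so the list reached from the empty
   one depends only on the element represented by a word. Spelled out as a word it lies in N,
   and it is the word itself when that word is already in N; thus N is a set of unique normal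
   forms.

   Consequently the edge from gamma in N labelled a lies on T exactly when gamma a is in N or
   gamma ends in a^-1. Letters x^(+-1) can always be appended or cancelled, and for
   y^(+-1) after a suffix y^(+-1) x^(i_0) the only obstructions are the forbidden subwords
   y x^i y and y x^(i+1) y^-1, which give the conditions of the lemma. *)

section \<open>Thompson's group F as a quotient of the free monoid\<close>

definition word_inv :: "word \<Rightarrow> word" where
  "word_inv w = rev (map linv w)"

lemma linv_linv [simp]: "linv (linv l) = l"
  by (simp add: linv_def)

lemma eqF_append:
  assumes "eqF u u'" and "eqF v v'"
  shows "eqF (u @ v) (u' @ v')"
proof -
  have "eqF (u @ v) (u' @ v)" using eqF_cong[OF assms(1), of "[]" v] by simp
  moreover have "eqF (u' @ v) (u' @ v')" using eqF_cong[OF assms(2), of u' "[]"] by simp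
  ultimately show ?thesis by (rule eqF_trans)
qed

lemma eqF_append_cancel: "eqF (u @ [l, linv l]) u"
  using eqF_cong[OF eqF_cancel[of l], of u "[]"] by simp

lemma eqF_word_inv_append: "eqF (word_inv u @ u) []"
proof (induction u)
  case Nil
  show ?case by (simp add: word_inv_def eqF_refl)
next
  case (Cons l u)
  have "eqF (word_inv u @ [linv l, l] @ u) (word_inv u @ [] @ u)"
    using eqF_cong[OF eqF_cancel[of "linv l"]] by simp
  then have "eqF (word_inv (l # u) @ l # u) (word_inv u @ u)"
    by (simp add: word_inv_def)
  then show ?case
    using Cons.IH by (rule eqF_trans)
qed

lemma eqF_word_inv_relator:
  assumes "eqF r []"
  shows "eqF (word_inv r) []"
proof -
  have "eqF (word_inv r @ r @ []) (word_inv r @ [] @ [])"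
    using eqF_cong[OF assms] .
  then have "eqF (word_inv r) (word_inv r @ r)"
    by (simp add: eqF_sym)
  then show ?thesis
    using eqF_word_inv_append by (rule eqF_trans)
qed

lemma eqF_word_inv: "eqF u v \<Longrightarrow> eqF (word_inv u) (word_inv v)"
proof (induction rule: eqF.induct)
  case (eqF_refl u)
  show ?case by (rule eqF.eqF_refl)
next
  case (eqF_sym u v)
  show ?case using eqF_sym.IH by (rule eqF.eqF_sym)
next
  case (eqF_trans u v w)
  show ?case using eqF_trans.IH by (rule eqF.eqF_trans)
next
  case (eqF_cong u v p s)
  then show ?case
    using eqF.eqF_cong[OF eqF_cong.IH, of "word_inv s" "word_inv p"] by (simp add: word_inv_def)
next
  case (eqF_cancel l)
  then show ?case
    using eqF.eqF_cancel[of l] by (simp add: word_inv_def)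
next
  case eqF_rel1
  show ?case using eqF_word_inv_relator[OF eqF.eqF_rel1] by (simp add: word_inv_def)
next
  case eqF_rel2
  show ?case using eqF_word_inv_relator[OF eqF.eqF_rel2] by (simp add: word_inv_def)
qed

(* F is written additively, as an instance of the type class group_add. *)
quotient_type thompsonF = word / eqF
  morphisms word_of elt
  by (rule equivpI) (auto simp: reflp_def symp_def transp_def intro: eqF.intros)

instantiation thompsonF :: group_add
begin

lift_definition zero_thompsonF :: thompsonF is "[]" .

lift_definition plus_thompsonF :: "thompsonF \<Rightarrow> thompsonF \<Rightarrow> thompsonF" is "(@)"
  by (rule eqF_append)

lift_definition uminus_thompsonF :: "thompsonF \<Rightarrow> thompsonF" is word_inv
  by (rule eqF_word_inv)

definition minus_thompsonF :: "thompsonF \<Rightarrow> thompsonF \<Rightarrow> thompsonF" where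
  "a - b = a + - (b :: thompsonF)"

instance
proof
  fix a b c :: thompsonF
  show "a + b + c = a + (b + c)" by transfer (simp add: eqF_refl)
  show "0 + a = a" by transfer (simp add: eqF_refl)
  show "a + 0 = a" by transfer (simp add: eqF_refl)
  show "- a + a = 0" by transfer (rule eqF_word_inv_append)
  show "a + - b = a - b" by (simp add: minus_thompsonF_def)
qed

end

lemma elt_append: "elt (u @ v) = elt u + elt v"
  by (simp add: plus_thompsonF.abs_eq)

lemma elt_Cons: "elt (l # u) = elt [l] + elt u"
  using elt_append[of "[l]" u] by simp

lemma elt_Nil: "elt [] = 0"
  by (simp add: zero_thompsonF_def)

lemma elt_eq_iff: "elt u = elt v \<longleftrightarrow> eqF u v"
  by (simp add: thompsonF.abs_eq_iff)

lemma elt_linv: "elt [linv l] = - elt [l]"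
  by (simp add: uminus_thompsonF.abs_eq word_inv_def)

(* Keeping a + - b unfolded lets group_simps normalise words in the group operations. *)
bundle no_diff_simp = add_uminus_conv_diff [simp del]

context
  includes no_diff_simp
begin

lemmas group_simps = add.assoc minus_add diff_conv_add_uminus

lemma add_eq_add_conj_iff: "(a :: 'a :: group_add) + b = b + c \<longleftrightarrow> - b + a + b = c"
  by (metis add.assoc add_minus_cancel minus_add_cancel)

lemma conj_eq_of_relator:
  assumes "(a :: 'a :: group_add) + - b + - a + c = 0"
  shows "c + a = a + b"
proof -
  have "c = - (a + - b + - a)"
    using minus_unique[OF assms] by simp
  then show ?thesis
    by (simp add: group_simps)
qed

lemma conj_add: "- c + (a + b) + c = (- c + a + c) + (- c + (b :: 'a :: group_add) + c)"
  by (simp add: group_simps)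

section \<open>The conjugates of y by powers of x\<close>

definition x_pow :: "int \<Rightarrow> thompsonF" where
  "x_pow k = elt (xpow k)"

definition y_conj :: "int \<Rightarrow> bool \<Rightarrow> thompsonF" where
  "y_conj s e = - x_pow s + elt [(GY, e)] + x_pow s"

abbreviation y_idx :: "int \<Rightarrow> thompsonF" where
  "y_idx s \<equiv> y_conj s True"

lemma x_pow_0: "x_pow 0 = 0"
  by (simp add: x_pow_def xpow_def elt_Nil)

lemma x_pow_succ: "x_pow (k + 1) = x_pow k + elt [lx]"
proof (cases "k \<ge> 0")
  case True
  then have "xpow (k + 1) = xpow k @ [lx]"
    by (simp add: xpow_def nat_add_distrib replicate_append_same)
  then show ?thesis
    by (simp add: x_pow_def elt_append)
next
  case False
  then obtain m where m: "nat (- k) = Suc m"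
    by (metis gr0_implies_Suc linorder_not_le neg_0_less_iff_less zero_less_nat_eq)
  then have "nat (- (k + 1)) = m" and "0 \<le> k + 1 \<Longrightarrow> m = 0"
    using False by simp_all
  then have "xpow k = xpow (k + 1) @ [lX]"
    using m False by (simp add: xpow_def flip: replicate_append_same)
  then have "x_pow k = x_pow (k + 1) + - elt [lx]"
    using elt_linv[of lx] by (simp add: x_pow_def elt_append linv_def)
  then show ?thesis
    by (simp add: add.assoc)
qed

lemma x_pow_1: "x_pow 1 = elt [lx]"
  using x_pow_succ[of 0] by (simp add: x_pow_0)

lemma x_pow_add: "x_pow (a + b) = x_pow a + x_pow b"
proof (induction b rule: int_induct[where k = 0])
  case base
  show ?case by (simp add: x_pow_0)
next
  case (step1 i)
  then show ?case
    using x_pow_succ[of "a + i"] x_pow_succ[of i] by (simp add: add.assoc)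
next
  case (step2 i)
  then have "x_pow (a + (i - 1)) + elt [lx] = x_pow a + x_pow (i - 1) + elt [lx]"
    using x_pow_succ[of "a + (i - 1)"] x_pow_succ[of "i - 1"] by (simp add: add.assoc)
  then show ?case
    by simp
qed

lemma x_pow_minus: "x_pow (- a) = - x_pow a"
  using x_pow_add[of a "- a"] by (simp add: x_pow_0 minus_unique)

lemma y_conj_False: "y_conj s False = - y_idx s"
  using elt_linv[of ly] by (simp add: y_conj_def linv_def group_simps)

lemma y_conj_cancel: "y_conj t e + y_conj t (\<not> e) = 0"
  by (cases e) (simp_all add: y_conj_False)

lemma x_pow_conj_y_conj: "- x_pow k + y_conj s e + x_pow k = y_conj (s + k) e"
  by (simp add: y_conj_def x_pow_add group_simps)


lemma elt_Cons_Cons: "elt (l # l' # u) = elt [l] + elt (l' # u)"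
  by (rule elt_Cons)

lemma elt_lX: "elt [lX] = - elt [lx]" and elt_lY: "elt [lY] = - elt [ly]"
  using elt_linv[of lx] elt_linv[of ly] by (simp_all add: linv_def)

lemma x_pow_2: "x_pow 2 = elt [lx] + elt [lx]"
  using x_pow_succ[of 1] by (simp add: x_pow_1)

lemma x_pow_3: "x_pow 3 = elt [lx] + elt [lx] + elt [lx]"
  using x_pow_succ[of 2] by (simp add: x_pow_2)

lemma y_idx_rel_of_relator:
  assumes "eqF r []" and r: "elt r = y_idx 0 + - y_idx (d + 1) + - y_idx 0 + y_idx d"
  shows "y_idx (t + d) + y_idx t = y_idx t + y_idx (t + d + 1)"
proof -
  have "elt r = 0"
    using \<open>eqF r []\<close> elt_eq_iff elt_Nil by metis
  then have "y_idx d + y_idx 0 = y_idx 0 + y_idx (d + 1)"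
    using conj_eq_of_relator[of "y_idx 0" "y_idx (d + 1)" "y_idx d"] r by simp
  then have "- x_pow t + (y_idx d + y_idx 0) + x_pow t = - x_pow t + (y_idx 0 + y_idx (d + 1)) + x_pow t"
    by simp
  then have "y_idx (d + t) + y_idx (0 + t) = y_idx (0 + t) + y_idx (d + 1 + t)"
    by (simp only: conj_add x_pow_conj_y_conj)
  then show ?thesis
    by (simp add: ac_simps)
qed

lemma y_idx_rel_1: "y_idx (t + 1) + y_idx t = y_idx t + y_idx (t + 2)"
proof -
  have "elt rel1 = y_idx 0 + - y_idx (1 + 1) + - y_idx 0 + y_idx 1"
    by (simp add: rel1_def elt_Cons_Cons elt_lX elt_lY y_conj_def x_pow_0 x_pow_1 x_pow_2
        group_simps)
  from y_idx_rel_of_relator[OF eqF_rel1 this, of t] show ?thesis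
    by (simp add: add.assoc)
qed

lemma y_idx_rel_2: "y_idx (t + 2) + y_idx t = y_idx t + y_idx (t + 3)"
proof -
  have "elt rel2 = y_idx 0 + - y_idx (2 + 1) + - y_idx 0 + y_idx 2"
    by (simp add: rel2_def elt_Cons_Cons elt_lX elt_lY y_conj_def x_pow_0 x_pow_2 x_pow_3
        group_simps)
  from y_idx_rel_of_relator[OF eqF_rel2 this, of t] show ?thesis
    by (simp add: add.assoc)
qed

text \<open>The two defining relations of F are the cases \<open>s - t = 1, 2\<close>; the general case
  follows by induction on \<open>s - t\<close>, conjugating by \<open>y_idx (t + 1) + y_idx t = y_idx t + y_idx (t + 2)\<close>.\<close>
lemma y_idx_conj:
  assumes "t < s"
  shows "- y_idx t + y_idx s + y_idx t = y_idx (s + 1)"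
  using assms
proof (induction "nat (s - t)" arbitrary: s t rule: less_induct)
  case less
  show ?case
  proof (cases "s - t \<le> 2")
    case True
    then consider "s = t + 1" | "s = t + 2"
      using less.prems by linarith
    then show ?thesis
    proof cases
      case 1
      then show ?thesis
        using add_eq_add_conj_iff[THEN iffD1, OF y_idx_rel_1[of t]] by (simp add: add.assoc)
    next
      case 2
      then show ?thesis
        using add_eq_add_conj_iff[THEN iffD1, OF y_idx_rel_2[of t]] by (simp add: add.assoc)
    qed
  next
    case False
    have IH: "- y_idx t' + y_idx s' + y_idx t' = y_idx (s' + 1)"
      if "t' < s'" and "s' - t' < s - t" for s' t'
      using less.hyps[of s' t'] that by simp
    have "y_idx s = - y_idx (t + 1) + y_idx (s - 1) + y_idx (t + 1)"
      using IH[of "t + 1" "s - 1"] False by simp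
    then have "- y_idx t + y_idx s + y_idx t
        = - (y_idx (t + 1) + y_idx t) + y_idx (s - 1) + (y_idx (t + 1) + y_idx t)"
      by (simp add: group_simps)
    also have "\<dots> = - y_idx (t + 2) + (- y_idx t + y_idx (s - 1) + y_idx t) + y_idx (t + 2)"
      by (simp only: y_idx_rel_1) (simp add: group_simps)
    also have "- y_idx t + y_idx (s - 1) + y_idx t = y_idx s"
      using IH[of t "s - 1"] False by simp
    also have "- y_idx (t + 2) + y_idx s + y_idx (t + 2) = y_idx (s + 1)"
      using IH[of "t + 2" s] False by simp
    finally show ?thesis .
  qed
qed

lemma y_conj_commute_y_idx:
  assumes "t < s"
  shows "y_conj s e + y_idx t = y_idx t + y_conj (s + 1) e"
proof (cases e)
  case True
  then show ?thesis
    using add_eq_add_conj_iff[THEN iffD2, OF y_idx_conj[OF assms]] by simp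
next
  case False
  have conj: "- y_idx t + - y_idx s + y_idx t = - y_idx (s + 1)"
    using arg_cong[OF y_idx_conj[OF assms], of uminus] by (simp add: group_simps)
  show ?thesis
    using False add_eq_add_conj_iff[THEN iffD2, OF conj] by (simp add: y_conj_False)
qed

lemma y_conj_commute_y_idx_inv:
  assumes "t + 2 \<le> s"
  shows "y_conj s e + - y_idx t = - y_idx t + y_conj (s - 1) e"
proof -
  have "y_conj (s - 1) e + y_idx t = y_idx t + y_conj s e"
    using y_conj_commute_y_idx[of t "s - 1" e] assms by simp
  then have "y_conj s e = - y_idx t + y_conj (s - 1) e + y_idx t"
    by (simp add: add_eq_add_conj_iff)
  then show ?thesis
    by (simp add: group_simps)
qed

section \<open>The action of words on lists of conjugates of y\<close>

text \<open>A list \<open>[(s\<^sub>1, e\<^sub>1), \<dots>, (s\<^sub>k, e\<^sub>k)]\<close> stands for the product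
  \<open>y_conj s\<^sub>k e\<^sub>k + \<dots> + y_conj s\<^sub>1 e\<^sub>1\<close>: the head of the list is the rightmost factor.\<close>

type_synonym ylist = "(int \<times> bool) list"

fun yprod :: "ylist \<Rightarrow> thompsonF" where
  "yprod [] = 0"
| "yprod ((s, e) # L) = yprod L + y_conj s e"

fun reduced_pair :: "int \<times> bool \<Rightarrow> int \<times> bool \<Rightarrow> bool" where
  "reduced_pair (s, e) (s', e') =
     (if e then s' \<le> s \<and> (s' = s \<longrightarrow> e') else s' \<le> s + 1 \<and> (s' = s \<longrightarrow> \<not> e'))"

text \<open>The order on lists is chosen so that spelling them out (\<open>ylist_word\<close> below) avoids
  the forbidden subwords of N.\<close>
abbreviation reduced :: "ylist \<Rightarrow> bool" where
  "reduced \<equiv> successively reduced_pair"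

text \<open>Right multiplication of a reduced list by \<open>y_conj t e\<close>: the new factor moves towards the
  left of the product, past the factors it commutes with by \<open>y_conj_commute_y_idx\<close> and
  \<open>y_conj_commute_y_idx_inv\<close>, until it is cancelled or the list is reduced again.\<close>
fun ylist_mult :: "int \<Rightarrow> bool \<Rightarrow> ylist \<Rightarrow> ylist" where
  "ylist_mult t e [] = [(t, e)]"
| "ylist_mult t e ((s, f) # L) =
     (if e then
        if t < s then (s + 1, f) # ylist_mult t e L
        else if s = t \<and> \<not> f then L else (t, e) # (s, f) # L
      else
        if t + 2 \<le> s then (s - 1, f) # ylist_mult t e L
        else if s = t \<and> f then L else (t, e) # (s, f) # L)"

fun yshift :: "int \<Rightarrow> int \<times> bool \<Rightarrow> int \<times> bool" where
  "yshift k (s, e) = (s + k, e)"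

lemma reduced_tl: "reduced (h # L) \<Longrightarrow> reduced L"
  by (cases L) auto

lemma reduced_ylist_mult_pos:
  "reduced ((s, f) # L) \<Longrightarrow> t < s \<Longrightarrow> reduced ((s + 1, f) # ylist_mult t True L)"
proof (induction L arbitrary: s f)
  case (Cons b L)
  obtain u g where b: "b = (u, g)"
    by (cases b)
  show ?case
  proof (cases "t < u")
    case True
    then have "reduced ((u + 1, g) # ylist_mult t True L)"
      using Cons b by auto
    then show ?thesis
      using Cons b True by auto
  next
    case False
    then show ?thesis
      using Cons b by (cases L) (auto split: if_splits)
  qed
qed auto

lemma reduced_ylist_mult_neg:
  "reduced ((s, f) # L) \<Longrightarrow> t + 2 \<le> s \<Longrightarrow> reduced ((s - 1, f) # ylist_mult t False L)"
proof (induction L arbitrary: s f)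
  case (Cons b L)
  obtain u g where b: "b = (u, g)"
    by (cases b)
  show ?case
  proof (cases "t + 2 \<le> u")
    case True
    then have "reduced ((u - 1, g) # ylist_mult t False L)"
      using Cons b by auto
    then show ?thesis
      using Cons b True by auto
  next
    case False
    then show ?thesis
      using Cons b by (cases L) (auto split: if_splits)
  qed
qed auto

lemma reduced_ylist_mult: "reduced L \<Longrightarrow> reduced (ylist_mult t e L)"
proof (cases L)
  case (Cons b L')
  assume L: "reduced L"
  obtain u g where b: "b = (u, g)"
    by (cases b)
  have "reduced L'"
    using L Cons reduced_tl by blast
  show ?thesis
  proof (cases e)
    case True
    then show ?thesis
      using L Cons b \<open>reduced L'\<close> reduced_ylist_mult_pos[of u g L' t]
      by (auto simp del: successively.simps(3)) auto
  next
    case False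
    then show ?thesis
      using L Cons b \<open>reduced L'\<close> reduced_ylist_mult_neg[of u g L' t]
      by (auto simp del: successively.simps(3)) auto
  qed
qed simp

lemma reduced_map_yshift: "reduced (map (yshift k) L) \<longleftrightarrow> reduced L"
proof -
  have "reduced_pair (yshift k a) (yshift k b) = reduced_pair a b" for a b
    by (cases a; cases b) simp
  then show ?thesis
    by (simp add: successively_map)
qed

lemma ylist_mult_map_yshift:
  "ylist_mult t e (map (yshift k) L) = map (yshift k) (ylist_mult (t - k) e L)"
proof -
  have "map (yshift k) (ylist_mult t' e L) = ylist_mult (t' + k) e (map (yshift k) L)" for t'
    by (induction L) auto
  then show ?thesis
    by (metis diff_add_cancel)
qed

lemma ylist_mult_head: "reduced ((s, e) # L) \<Longrightarrow> ylist_mult s e L = (s, e) # L"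
  by (cases L) (auto split: if_splits)

lemma ylist_mult_cancel: "reduced L \<Longrightarrow> ylist_mult t (\<not> e) (ylist_mult t e L) = L"
proof (induction L)
  case (Cons b L)
  obtain u g where b: "b = (u, g)"
    by (cases b)
  have "reduced L"
    using Cons.prems reduced_tl by blast
  then show ?case
    using Cons b ylist_mult_head[of t "\<not> e" L] by (cases e) auto
qed auto

lemma ylist_mult_commute:
  "reduced L \<Longrightarrow> t + 2 \<le> s \<Longrightarrow>
    ylist_mult s False (ylist_mult t True L) = ylist_mult t True (ylist_mult (s - 1) False L)"
proof (induction L)
  case (Cons b L)
  obtain u g where b: "b = (u, g)"
    by (cases b)
  have "reduced L"
    using Cons.prems reduced_tl by blast
  then show ?case
    using Cons b by (cases L) auto
qed auto

lemma ylist_mult_relator: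
  assumes "reduced L" and "1 \<le> d"
  shows "ylist_mult d True (ylist_mult 0 False (ylist_mult (d + 1) False (ylist_mult 0 True L))) = L"
proof -
  have "ylist_mult (d + 1) False (ylist_mult 0 True L) = ylist_mult 0 True (ylist_mult d False L)"
    using ylist_mult_commute[OF assms(1), of 0 "d + 1"] assms(2) by simp
  moreover have "ylist_mult 0 False (ylist_mult 0 True (ylist_mult d False L)) = ylist_mult d False L"
    using ylist_mult_cancel[OF reduced_ylist_mult[OF assms(1)], of 0 True d False] by simp
  moreover have "ylist_mult d True (ylist_mult d False L) = L"
    using ylist_mult_cancel[OF assms(1), of d False] by simp
  ultimately show ?thesis
    by simp
qed

lemma yprod_ylist_mult: "yprod (ylist_mult t e L) = yprod L + y_conj t e"
proof (induction L)
  case (Cons b L)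
  obtain u g where b: "b = (u, g)"
    by (cases b)
  then show ?case
    using Cons y_conj_commute_y_idx[of t u g] y_conj_commute_y_idx_inv[of t u g]
      y_conj_cancel[of t True] y_conj_cancel[of t False]
    by (cases e) (auto simp: add.assoc y_conj_False)
qed simp

lemma yprod_map_yshift: "yprod (map (yshift k) L) = - x_pow k + yprod L + x_pow k"
proof (induction L)
  case (Cons h L)
  obtain s e where h: "h = (s, e)"
    by (cases h)
  then show ?case
    using Cons x_pow_conj_y_conj[of k s e, symmetric] by (simp add: group_simps)
qed simp

type_synonym state = "int \<times> ylist"

fun state_elt :: "state \<Rightarrow> thompsonF" where
  "state_elt (T, L) = x_pow T + yprod L"

fun step :: "state \<Rightarrow> letter \<Rightarrow> state" where
  "step (T, L) (GX, True) = (T + 1, map (yshift 1) L)"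
| "step (T, L) (GX, False) = (T - 1, map (yshift (- 1)) L)"
| "step (T, L) (GY, e) = (T, ylist_mult 0 e L)"

definition run :: "state \<Rightarrow> word \<Rightarrow> state" where
  "run = foldl step"

lemma run_Nil [simp]: "run st [] = st"
  by (simp add: run_def)

lemma run_Cons [simp]: "run st (a # w) = run (step st a) w"
  by (simp add: run_def)

lemma run_append: "run st (u @ v) = run (run st u) v"
  by (simp add: run_def)

lemma reduced_step: "reduced L \<Longrightarrow> reduced (snd (step (T, L) a))"
  by (cases "((T, L), a)" rule: step.cases) (auto simp: reduced_map_yshift reduced_ylist_mult)

lemma reduced_run: "reduced (snd st) \<Longrightarrow> reduced (snd (run st w))"
proof (induction w arbitrary: st)
  case (Cons a w)
  then show ?case
    using reduced_step[of "snd st" "fst st" a] by simp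
qed simp

lemma state_elt_step: "state_elt (step (T, L) a) = state_elt (T, L) + elt [a]"
proof (cases "((T, L), a)" rule: step.cases)
  case 1
  then show ?thesis
    using x_pow_add[of T 1] by (simp add: yprod_map_yshift x_pow_1 group_simps)
next
  case 2
  then show ?thesis
    using x_pow_add[of T "- 1"]
    by (simp add: yprod_map_yshift x_pow_minus x_pow_1 elt_lX group_simps)
next
  case (3 e)
  then show ?thesis
    by (simp add: yprod_ylist_mult y_conj_def x_pow_0 add.assoc)
qed

lemma state_elt_run: "state_elt (run st w) = state_elt st + elt w"
proof (induction w arbitrary: st)
  case Nil
  show ?case by (simp add: elt_Nil)
next
  case (Cons a w)
  then show ?case
    using state_elt_step[of "fst st" "snd st" a] by (simp add: elt_Cons[of a w] add.assoc)
qed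

lemma yshift_comp [simp]: "yshift a \<circ> yshift b = yshift (a + b)"
  by (auto simp: fun_eq_iff ac_simps)

lemma yshift_0 [simp]: "yshift 0 = id"
  by (auto simp: fun_eq_iff)

lemma run_cancel: "reduced L \<Longrightarrow> run (T, L) [l, linv l] = (T, L)"
  by (cases "((T, L), l)" rule: step.cases) (auto simp: linv_def ylist_mult_cancel ylist_mult_map_yshift)

lemma run_eqF: "eqF u v \<Longrightarrow> reduced (snd st) \<Longrightarrow> run st u = run st v"
proof (induction arbitrary: st rule: eqF.induct)
  case (eqF_cong u v p s)
  have "reduced (snd (run st p))"
    using eqF_cong.prems reduced_run by blast
  then show ?case
    using eqF_cong.IH by (simp add: run_append)
next
  case (eqF_cancel l)
  then show ?case
    using run_cancel[of "snd st" "fst st" l] by simp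
next
  case eqF_rel1
  then show ?case
    using ylist_mult_relator[of "snd st" 1] by (cases st) (simp add: rel1_def ylist_mult_map_yshift)
next
  case eqF_rel2
  then show ?case
    using ylist_mult_relator[of "snd st" 2] by (cases st) (simp add: rel2_def ylist_mult_map_yshift)
qed simp_all

fun ylist_word :: "int \<Rightarrow> ylist \<Rightarrow> int \<Rightarrow> word" where
  "ylist_word T [] p = xpow (T - p)"
| "ylist_word T ((s, e) # L) p = ylist_word T L s @ [(GY, e)] @ xpow (s - p)"

fun state_word :: "state \<Rightarrow> word" where
  "state_word (T, L) = ylist_word T L 0"

definition nf :: "word \<Rightarrow> word" where
  "nf w = state_word (run (0, []) w)"

lemma elt_ylist_word: "elt (ylist_word T L p) = x_pow T + yprod L + - x_pow p"
proof (induction L arbitrary: p)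
  case Nil
  show ?case
    using x_pow_add[of T "- p"] by (simp add: x_pow_minus group_simps flip: x_pow_def)
next
  case (Cons h L)
  obtain s e where h: "h = (s, e)"
    by (cases h)
  then show ?case
    using Cons x_pow_add[of s "- p"] elt_Cons[of "(GY, e)" "xpow (s - p)"]
    by (simp add: elt_append x_pow_minus y_conj_def group_simps flip: x_pow_def)
qed

lemma nf_eqF: "eqF (nf w) w"
proof -
  have "elt (nf w) = state_elt (run (0, []) w)"
    by (cases "run (0, []) w") (simp add: nf_def elt_ylist_word x_pow_0)
  also have "\<dots> = elt w"
    by (simp add: state_elt_run x_pow_0)
  finally show ?thesis
    by (simp add: elt_eq_iff)
qed

lemma nf_cong: "eqF u v \<Longrightarrow> nf u = nf v"
  unfolding nf_def using run_eqF[of u v "(0, [])"] by simp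

end

section \<open>The normal forms N\<close>

lemma subword_append_right: "subword q u \<Longrightarrow> subword q (u @ v)"
  unfolding subword_def by (metis append.assoc)

lemma subword_snoc:
  assumes "subword q (u @ [b])" and "q \<noteq> []"
  shows "subword q u \<or> (\<exists>q' p. q = q' @ [b] \<and> u = p @ q')"
proof -
  obtain p s where ps: "u @ [b] = p @ q @ s"
    using assms(1) by (auto simp: subword_def)
  show ?thesis
  proof (cases s rule: rev_cases)
    case Nil
    then show ?thesis
      using ps assms(2) by (cases q rule: rev_cases) auto
  next
    case (snoc s' c)
    then show ?thesis
      using ps by (auto simp: subword_def)
  qed
qed

lemma NF_Nil: "[] \<in> NF"
  by (auto simp: NF_def subword_def)

lemma NF_appendD: "u @ v \<in> NF \<Longrightarrow> u \<in> NF"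
  unfolding NF_def using subword_append_right by blast

lemma NF_snocI:
  assumes u: "u \<in> NF" and last: "u \<noteq> [] \<Longrightarrow> last u \<noteq> linv b"
    and y: "\<And>e i v. 1 \<le> i \<Longrightarrow> b = ly \<Longrightarrow> u \<noteq> v @ [(GY, e)] @ replicate i lx"
    and Y: "\<And>e i v. 1 \<le> i \<Longrightarrow> b = lY \<Longrightarrow> u \<noteq> v @ [(GY, e)] @ replicate (i + 1) lx"
  shows "u @ [b] \<in> NF"
proof -
  have new_subword: "\<exists>p. u = p @ q \<and> r = b" if "subword (q @ [r]) (u @ [b])"
    and "\<not> subword (q @ [r]) u" for q r
    using subword_snoc[OF that(1)] that(2) by auto
  have "\<not> subword [l, linv l] (u @ [b])" for l
    using new_subword[of "[l]" "linv l"] u last unfolding NF_def by fastforce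
  moreover have "\<not> subword ([(GY, e)] @ replicate i lx @ [ly]) (u @ [b])" if "1 \<le> i" for e i
    using new_subword[of "[(GY, e)] @ replicate i lx" ly] u y[OF that] that
    unfolding NF_def by fastforce
  moreover have "\<not> subword ([(GY, e)] @ replicate (i + 1) lx @ [lY]) (u @ [b])" if "1 \<le> i" for e i
    using new_subword[of "[(GY, e)] @ replicate (i + 1) lx" lY] u Y[OF that] that
    unfolding NF_def by fastforce
  ultimately show ?thesis
    unfolding NF_def by blast
qed

lemma subword_suffix: "subword q (p @ q)"
  unfolding subword_def by (metis append_Nil2)

lemma cancel_not_NF: "p @ [l, linv l] \<notin> NF"
  unfolding NF_def using subword_suffix by blast

lemma y_x_y_not_NF: "1 \<le> i \<Longrightarrow> p @ [(GY, e)] @ replicate i lx @ [ly] \<notin> NF"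
  unfolding NF_def using subword_suffix by blast

lemma y_xx_Y_not_NF: "1 \<le> i \<Longrightarrow> p @ [(GY, e)] @ replicate (i + 1) lx @ [lY] \<notin> NF"
  unfolding NF_def using subword_suffix by blast

lemma GY_notin_xpow: "GY \<notin> fst ` set (xpow k)"
  by (auto simp: xpow_def)

lemma NF_snoc_GY_of_GY_notin:
  assumes "GY \<notin> fst ` set u" and "u \<in> NF"
  shows "u @ [(GY, b)] \<in> NF"
proof (rule NF_snocI[OF assms(2)])
  show "u \<noteq> [] \<Longrightarrow> last u \<noteq> linv (GY, b)"
    using assms(1) by (metis fst_conv image_eqI last_in_set linv_def)
qed (use assms(1) in \<open>auto simp: image_iff\<close>)

lemma NF_snoc_GX:
  assumes "u \<in> NF" and "fst a = GX"
  shows "u @ [a] \<in> NF \<or> (\<exists>w. u = w @ [linv a])"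
proof (cases "u \<noteq> [] \<and> last u = linv a")
  case True
  then show ?thesis
    by (metis append_butlast_last_id)
next
  case False
  have "u @ [a] \<in> NF"
  proof (rule NF_snocI[OF assms(1)])
    show "u \<noteq> [] \<Longrightarrow> last u \<noteq> linv a"
      using False by auto
  qed (use assms(2) in auto)
  then show ?thesis ..
qed

lemma append_GY_eq_GY_notin:
  assumes "v @ [(GY, e)] @ r = v' @ [(GY, e')] @ r'"
    and "GY \<notin> fst ` set r" and "GY \<notin> fst ` set r'"
  shows "e = e' \<and> r = r'"
  using assms
proof (induction r arbitrary: r' rule: rev_induct)
  case Nil
  then show ?case
    by (cases r' rule: rev_cases) (auto simp: image_iff)
next
  case (snoc c r)
  then show ?case
    by (cases r' rule: rev_cases) (auto simp: image_iff)
qed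

lemma replicate_lx_eq_xpow: "replicate i lx = xpow k \<Longrightarrow> 1 \<le> i \<Longrightarrow> k = int i"
  by (cases "0 \<le> k"; cases i; cases "nat (- k)") (auto simp: xpow_def dest: arg_cong[of _ _ length])

lemma NF_snoc_GY_iff:
  assumes u: "u = v @ [(GY, e)] @ xpow k" and "u \<in> NF"
  shows "u @ [(GY, b)] \<in> NF \<longleftrightarrow> (k \<noteq> 0 \<or> e = b) \<and> (if b then k \<le> 0 else k \<le> 1)"
proof
  assume NF: "u @ [(GY, b)] \<in> NF"
  have "k \<noteq> 0 \<or> e = b"
    using NF cancel_not_NF[of v "(GY, e)"] by (cases b; cases e) (auto simp: u xpow_def linv_def)
  moreover have "k \<le> 0" if b
  proof (rule ccontr)
    assume "\<not> k \<le> 0"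
    then have "1 \<le> nat k" and "xpow k = replicate (nat k) lx"
      by (auto simp: xpow_def)
    then show False
      using NF y_x_y_not_NF[of "nat k" v e] that by (simp add: u)
  qed
  moreover have "k \<le> 1" if "\<not> b"
  proof (rule ccontr)
    assume "\<not> k \<le> 1"
    then have "1 \<le> nat k - 1" and "xpow k = replicate (nat k - 1 + 1) lx"
      by (auto simp: xpow_def)
    then show False
      using NF y_xx_Y_not_NF[of "nat k - 1" v e] that by (simp add: u)
  qed
  ultimately show "(k \<noteq> 0 \<or> e = b) \<and> (if b then k \<le> 0 else k \<le> 1)"
    by simp
next
  assume k: "(k \<noteq> 0 \<or> e = b) \<and> (if b then k \<le> 0 else k \<le> 1)"
  show "u @ [(GY, b)] \<in> NF"
  proof (rule NF_snocI[OF \<open>u \<in> NF\<close>])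
    show "last u \<noteq> linv (GY, b)" if "u \<noteq> []"
    proof (cases "k = 0")
      case True
      then show ?thesis
        using k by (simp add: u xpow_def linv_def)
    next
      case False
      then have "last u \<in> set (xpow k)"
        by (simp add: u xpow_def)
      then show ?thesis
        using GY_notin_xpow[of k] by (metis fst_conv image_eqI linv_def)
    qed
  next
    fix e' and i :: nat and v'
    assume i: "1 \<le> i" "(GY, b) = ly"
    show "u \<noteq> v' @ [(GY, e')] @ replicate i lx"
    proof
      assume "u = v' @ [(GY, e')] @ replicate i lx"
      then have "v @ [(GY, e)] @ xpow k = v' @ [(GY, e')] @ replicate i lx"
        by (simp add: u)
      from append_GY_eq_GY_notin[OF this GY_notin_xpow] have "replicate i lx = xpow k"
        by (auto simp: image_iff)
      from replicate_lx_eq_xpow[OF this] i k show False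
        by simp
    qed
  next
    fix e' and i :: nat and v'
    assume i: "1 \<le> i" "(GY, b) = lY"
    show "u \<noteq> v' @ [(GY, e')] @ replicate (i + 1) lx"
    proof
      assume "u = v' @ [(GY, e')] @ replicate (i + 1) lx"
      then have "v @ [(GY, e)] @ xpow k = v' @ [(GY, e')] @ replicate (i + 1) lx"
        by (simp add: u)
      from append_GY_eq_GY_notin[OF this GY_notin_xpow] have "replicate (i + 1) lx = xpow k"
        by (auto simp: image_iff)
      from replicate_lx_eq_xpow[OF this] i k show False
        by simp
    qed
  qed
qed

lemma NF_append_replicate_GX:
  assumes "u \<in> NF" and "u \<noteq> [] \<Longrightarrow> fst (last u) = GY" and "fst l = GX"
  shows "u @ replicate n l \<in> NF"
proof (induction n)
  case (Suc n)
  have "(u @ replicate n l) @ [l] \<in> NF"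
  proof (rule NF_snocI[OF Suc.IH])
    show "u @ replicate n l \<noteq> [] \<Longrightarrow> last (u @ replicate n l) \<noteq> linv l"
      using assms by (cases n) (auto simp: linv_def prod_eq_iff)
  qed (use assms(3) in auto)
  then show ?case
    by (simp flip: replicate_append_same)
qed (simp add: assms(1))

lemma NF_append_xpow: "u \<in> NF \<Longrightarrow> (u \<noteq> [] \<Longrightarrow> fst (last u) = GY) \<Longrightarrow> u @ xpow k \<in> NF"
  unfolding xpow_def using NF_append_replicate_GX[of u lx] NF_append_replicate_GX[of u lX] by auto

lemma NF_ylist_word: "reduced L \<Longrightarrow> ylist_word T L p \<in> NF"
proof (induction L arbitrary: p)
  case Nil
  show ?case
    using NF_append_xpow[OF NF_Nil] by simp
next
  case (Cons h L)
  obtain s e where h: "h = (s, e)"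
    by (cases h)
  have IH: "ylist_word T L s \<in> NF"
    using Cons reduced_tl by blast
  have "ylist_word T L s @ [(GY, e)] \<in> NF"
  proof (cases L)
    case Nil
    then show ?thesis
      using IH NF_snoc_GY_of_GY_notin GY_notin_xpow by simp
  next
    case (Cons h' L')
    obtain s' e' where h': "h' = (s', e')"
      by (cases h')
    have "reduced_pair (s, e) (s', e')"
      using Cons.prems h Cons h' by simp
    then show ?thesis
      using NF_snoc_GY_iff[of _ "ylist_word T L' s'" e' "s' - s" e] IH Cons h'
      by (auto split: if_splits)
  qed
  then show ?case
    using NF_append_xpow[of "ylist_word T L s @ [(GY, e)]" "s - p"] h by simp
qed

lemma nf_NF: "nf w \<in> NF"
  using reduced_run[of "(0, [])" w] NF_ylist_word
  by (cases "run (0, []) w") (simp add: nf_def)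

lemma ylist_word_yshift: "ylist_word (T + k) (map (yshift k) L) p = ylist_word T L (p - k)"
  by (induction L arbitrary: p) (auto simp: algebra_simps)

lemma NF_xpow_snoc_lx: "u @ xpow k @ [lx] \<in> NF \<Longrightarrow> xpow k @ [lx] = xpow (k + 1)"
proof (cases "0 \<le> k")
  case True
  then show ?thesis
    by (simp add: xpow_def nat_add_distrib replicate_append_same)
next
  case False
  assume NF: "u @ xpow k @ [lx] \<in> NF"
  obtain m where "nat (- k) = Suc m"
    using False by (metis gr0_implies_Suc linorder_not_le neg_0_less_iff_less zero_less_nat_eq)
  then have "u @ xpow k @ [lx] = (u @ replicate m lX) @ [lX, linv lX]"
    using False by (simp add: xpow_def linv_def replicate_append_same flip: replicate_Suc)
  then show ?thesis
    using NF cancel_not_NF by metis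
qed

lemma NF_xpow_snoc_lX: "u @ xpow k @ [lX] \<in> NF \<Longrightarrow> xpow k @ [lX] = xpow (k - 1)"
proof (cases "k \<le> 0")
  case True
  then have "nat (- (k - 1)) = Suc (nat (- k))"
    by simp
  then show ?thesis
    using True by (simp add: xpow_def replicate_append_same)
next
  case False
  assume NF: "u @ xpow k @ [lX] \<in> NF"
  obtain m where "nat k = Suc m"
    using False by (metis gr0_implies_Suc linorder_not_le zero_less_nat_eq)
  then have "u @ xpow k @ [lX] = (u @ replicate m lx) @ [lx, linv lx]"
    using False by (simp add: xpow_def linv_def replicate_append_same flip: replicate_Suc)
  then show ?thesis
    using NF cancel_not_NF by metis
qed

lemma ylist_mult_0_Cons:
  assumes "ylist_word T L s @ [(GY, e)] @ xpow s @ [(GY, b)] \<in> NF"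
  shows "ylist_mult 0 b ((s, e) # L) = (0, b) # (s, e) # L"
proof -
  have "(s \<noteq> 0 \<or> e = b) \<and> (if b then s \<le> 0 else s \<le> 1)"
    using NF_snoc_GY_iff[of _ "ylist_word T L s" e s b] NF_appendD[of _ "[(GY, b)]"] assms
    by simp
  then show ?thesis
    by (auto split: if_splits)
qed

lemma state_word_step:
  assumes "reduced L" and NF: "ylist_word T L 0 @ [a] \<in> NF"
  shows "state_word (step (T, L) a) = ylist_word T L 0 @ [a]"
proof (cases "((T, L), a)" rule: step.cases)
  case 1
  then have "state_word (step (T, L) a) = ylist_word T L (- 1)"
    using ylist_word_yshift[of T 1 L 0] by simp
  then show ?thesis
    using NF NF_xpow_snoc_lx[of "[]" T] NF_xpow_snoc_lx[of "ylist_word T _ _ @ [(GY, _)]"] 1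
    by (cases L) auto
next
  case 2
  then have "state_word (step (T, L) a) = ylist_word T L 1"
    using ylist_word_yshift[of T "- 1" L 0] by simp
  then show ?thesis
    using NF NF_xpow_snoc_lX[of "[]" T] NF_xpow_snoc_lX[of "ylist_word T _ _ @ [(GY, _)]"] 2
    by (cases L) auto
next
  case (3 T' L' e)
  then show ?thesis
    using NF ylist_mult_0_Cons[of T] by (cases L) (auto simp: xpow_def)
qed

lemma nf_NF_id: "w \<in> NF \<Longrightarrow> nf w = w"
proof (induction w rule: rev_induct)
  case Nil
  show ?case
    by (simp add: nf_def xpow_def)
next
  case (snoc a w)
  obtain T L where TL: "run (0, []) w = (T, L)"
    by (cases "run (0, []) w")
  have "reduced L"
    using reduced_run[of "(0, [])" w] TL by simp
  moreover have "ylist_word T L 0 = w"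
    using snoc NF_appendD TL by (simp add: nf_def)
  ultimately show ?case
    using state_word_step[of L T a] snoc.prems TL by (simp add: nf_def run_append)
qed

lemma NF_unique: "u \<in> NF \<Longrightarrow> v \<in> NF \<Longrightarrow> eqF u v \<Longrightarrow> u = v"
  using nf_NF_id nf_cong by metis

section \<open>Edges of the tree T\<close>

lemma eqF_left_iff: "eqF u v \<Longrightarrow> eqF w u \<longleftrightarrow> eqF w v"
  using eqF_trans[of w u v] eqF_trans[of w v u] eqF_sym[of u v] by blast

lemma onT_eqF: "eqF \<gamma> \<gamma>' \<Longrightarrow> onT \<gamma> a \<longleftrightarrow> onT \<gamma>' a"
  unfolding onT_def using eqF_left_iff[of \<gamma> \<gamma>'] eqF_left_iff[OF eqF_append[OF _ eqF_refl[of "[a]"]]]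
  by simp

lemma onT_NF_iff:
  assumes "\<gamma> \<in> NF"
  shows "onT \<gamma> a \<longleftrightarrow> \<gamma> @ [a] \<in> NF \<or> (\<exists>w. \<gamma> = w @ [linv a])"
proof
  assume "onT \<gamma> a"
  then obtain w b where NF: "w @ [b] \<in> NF"
    and "(eqF w \<gamma> \<and> b = a) \<or> (eqF w (\<gamma> @ [a]) \<and> b = linv a)"
    unfolding onT_def by blast
  then consider "eqF w \<gamma>" "b = a" | "eqF w (\<gamma> @ [a])" "b = linv a"
    by blast
  then show "\<gamma> @ [a] \<in> NF \<or> (\<exists>w. \<gamma> = w @ [linv a])"
  proof cases
    case 1
    then show ?thesis
      using NF NF_unique[OF NF_appendD[OF NF] assms] by simp
  next
    case 2
    have "eqF (w @ [linv a]) (\<gamma> @ [a] @ [linv a])"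
      using eqF_append[OF 2(1) eqF_refl] by simp
    then have "eqF (w @ [linv a]) \<gamma>"
      using eqF_append_cancel[of \<gamma> a] eqF_trans by simp
    then show ?thesis
      using NF_unique NF assms 2(2) by blast
  qed
next
  assume "\<gamma> @ [a] \<in> NF \<or> (\<exists>w. \<gamma> = w @ [linv a])"
  then show "onT \<gamma> a"
  proof
    assume "\<gamma> @ [a] \<in> NF"
    then show ?thesis
      unfolding onT_def using eqF_refl by blast
  next
    assume "\<exists>w. \<gamma> = w @ [linv a]"
    then obtain w where w: "\<gamma> = w @ [linv a]" ..
    then have "eqF w (\<gamma> @ [a])"
      using eqF_append_cancel[of w "linv a"] eqF_sym by simp
    then show ?thesis
      unfolding onT_def using assms w by (metis linv_linv)
  qed
qed

lemma nfword_eq_snoc_xpow: "1 \<le> n \<Longrightarrow> \<exists>v. nfword n eps i = v @ [(GY, eps 1)] @ xpow (i 0)"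
proof (induction n)
  case (Suc n)
  then show ?case
    by (cases "n = 0") auto
qed simp

lemma snoc_GY_eq_snoc_xpow_iff:
  "(\<exists>w. v @ [(GY, e)] @ xpow k = w @ [(GY, c)]) \<longleftrightarrow> k = 0 \<and> e = c"
proof
  assume "\<exists>w. v @ [(GY, e)] @ xpow k = w @ [(GY, c)]"
  then obtain w where w: "v @ [(GY, e)] @ xpow k = w @ [(GY, c)]" ..
  have "xpow k = []"
  proof (rule ccontr)
    assume "xpow k \<noteq> []"
    then have "(GY, c) \<in> set (xpow k)"
      using arg_cong[OF w, of last] last_in_set by fastforce
    then show False
      using GY_notin_xpow by force
  qed
  then show "k = 0 \<and> e = c"
    using w by (auto simp: xpow_def split: if_splits)
qed (auto simp: xpow_def)

lemma nfword_snoc_iff: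
  assumes "nfword n eps i \<in> NF"
  shows "nfword n eps i @ [a] \<in> NF \<or> (\<exists>w. nfword n eps i = w @ [linv a]) \<longleftrightarrow>
    \<not> ((a = ly \<and> n \<ge> 1 \<and> i 0 \<ge> 1) \<or> (a = lY \<and> n \<ge> 1 \<and> i 0 \<ge> 2))"
proof (cases a)
  case (Pair g b)
  show ?thesis
  proof (cases g)
    case GX
    then show ?thesis
      using NF_snoc_GX[OF assms, of a] Pair by auto
  next
    case GY
    show ?thesis
    proof (cases "n = 0")
      case True
      then show ?thesis
        using NF_snoc_GY_of_GY_notin[OF GY_notin_xpow] assms Pair GY by simp
    next
      case False
      then obtain v where v: "nfword n eps i = v @ [(GY, eps 1)] @ xpow (i 0)"
        using nfword_eq_snoc_xpow[of n eps i] by auto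
      show ?thesis
        using NF_snoc_GY_iff[OF v assms, of b] snoc_GY_eq_snoc_xpow_iff[of v "eps 1" "i 0" "\<not> b"]
          v False Pair GY
        by (auto simp: linv_def)
    qed
  qed
qed

theorem lemma2p3:
  shows "(\<forall>(n::nat) (eps::nat \<Rightarrow> bool) (i::nat \<Rightarrow> int) (a::letter).
            nfword n eps i \<in> NF \<longrightarrow>
            (\<not> onT (nfword n eps i) a \<longleftrightarrow>
               (a = ly \<and> n \<ge> 1 \<and> i 0 \<ge> 1) \<or> (a = lY \<and> n \<ge> 1 \<and> i 0 \<ge> 2)))
       \<and> (\<forall>(\<gamma>::word) (a::letter). fst a = GX \<longrightarrow> onT \<gamma> a)"
proof (intro conjI allI impI)
  fix n eps i a
  assume NF: "nfword n eps i \<in> NF"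
  show "\<not> onT (nfword n eps i) a \<longleftrightarrow>
      (a = ly \<and> n \<ge> 1 \<and> i 0 \<ge> 1) \<or> (a = lY \<and> n \<ge> 1 \<and> i 0 \<ge> 2)"
    using onT_NF_iff[OF NF, of a] nfword_snoc_iff[OF NF, of a] by blast
next
  fix \<gamma> :: word and a :: letter
  assume "fst a = GX"
  then have "onT (nf \<gamma>) a"
    using onT_NF_iff[OF nf_NF] NF_snoc_GX[OF nf_NF] by simp
  then show "onT \<gamma> a"
    using onT_eqF[OF nf_eqF] by simp
qed

end
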